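(* Let $\Omega\subsetneq\mathbb{R}^{2n+1}$ be a nonempty open convex set (convex in the Euclidean sense; not necessarily bounded). For $\xi\in\Omega$ let $\hat\xi\in\partial\Omega$ be a point with $|\xi-\hat\xi|=\operatorname{dist}(\xi,\partial\Omega)$ and let $\nu(\xi)=(\hat\xi-\xi)/|\hat\xi-\xi|\in\mathbb{S}^{2n}$ (a unit normal to $\partial\Omega$ at $\hat\xi$). Then for every $u\in C_0^\infty(\Omega)$, \[ \int_\Omega|\nabla_{\mathbb{H}^n}u|^2\,d\xi\ge\frac14\int_\Omega\sum_{i=1}^n\frac{\langle X_i(\xi),\nu(\xi)\rangle^2+\langle Y_i(\xi),\nu(\xi)\rangle^2}{\operatorname{dist}(\xi,\partial\Omega)^2}|u|^2\,d\xi . \]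
   Context: $\mathbb{H}^n$ is $\mathbb{R}^{2n+1}$ with points $\xi=(x,y,t)$, $x,y\in\mathbb{R}^n$, $t\in\mathbb{R}$, and Lebesgue measure. For $1\le i\le n$, $X_i=\partial_{x_i}+2y_i\partial_t$, $Y_i=\partial_{y_i}-2x_i\partial_t$, identified with their coefficient vectors in $\mathbb{R}^{2n+1}$; $\langle\cdot,\cdot\rangle$ is the Euclidean inner product. $\nabla_{\mathbb{H}^n}u=(X_1u,\dots,X_nu,Y_1u,\dots,Y_nu)$, $|\nabla_{\mathbb{H}^n}u|^2=\sum_i(|X_iu|^2+|Y_iu|^2)$. $\operatorname{dist}$ is Euclidean distance and $\mathbb{S}^{2n}$ the Euclidean unit sphere. Functions are real-valued. *)

theory Defs
  imports "HOL-Analysis.Analysis"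
begin

text \<open>Points of the Heisenberg group H^n are triples (x,y,t) with x,y in R^n, t in R.
  The product type carries the Euclidean norm/inner product of R^(2n+1).\<close>
type_synonym 'n hpt = "(real^'n) \<times> (real^'n) \<times> real"

coinductive smooth_fun :: "('a::euclidean_space \<Rightarrow> real) \<Rightarrow> bool" where
  "(\<forall>x. f differentiable (at x)) \<Longrightarrow>
   (\<forall>b\<in>Basis. smooth_fun (\<lambda>x. frechet_derivative f (at x) b)) \<Longrightarrow> smooth_fun f"

definition C0_inf :: "'a::euclidean_space set \<Rightarrow> ('a \<Rightarrow> real) \<Rightarrow> bool" where
  "C0_inf \<Omega> u \<longleftrightarrow> smooth_fun u \<and> compact (closure {x. u x \<noteq> 0})
      \<and> closure {x. u x \<noteq> 0} \<subseteq> \<Omega>"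

text \<open>The vector fields X_i = d/dx_i + 2 y_i d/dt and Y_i = d/dy_i - 2 x_i d/dt,
  as coefficient vectors.\<close>
definition Xf :: "'n::finite \<Rightarrow> 'n hpt \<Rightarrow> 'n hpt" where
  "Xf i p = (case p of (x, y, t) \<Rightarrow> (axis i 1, 0, 2 * y $ i))"

definition Yf :: "'n::finite \<Rightarrow> 'n hpt \<Rightarrow> 'n hpt" where
  "Yf i p = (case p of (x, y, t) \<Rightarrow> (0, axis i 1, - 2 * x $ i))"

definition hgrad_sq :: "('n::finite hpt \<Rightarrow> real) \<Rightarrow> 'n hpt \<Rightarrow> real" where
  "hgrad_sq u p = (\<Sum>i\<in>UNIV. (frechet_derivative u (at p) (Xf i p))\<^sup>2
                                + (frechet_derivative u (at p) (Yf i p))\<^sup>2)"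

end

theory Submission
  imports Defs
begin

text \<open>Each field \<open>V \<in> {X\<^sub>i, Y\<^sub>i}\<close> is constant along its integral curves, the straight lines
  \<open>\<xi> + s V(\<xi>)\<close>, and its flow preserves Lebesgue measure. Integrating along these lines reduces the
  estimate for one field to the one-dimensional Hardy inequality
  \<open>\<integral> g\<^sup>2 / (4 dist(s, C)\<^sup>2) \<le> \<integral> g'\<^sup>2\<close> for \<open>g(s) = u(\<xi> + s V)\<close>, where \<open>C\<close> is the closed set of parameters
  at which the line leaves \<open>\<Omega>\<close>; by convexity the support of \<open>g\<close> lies in a single gap of \<open>C\<close>.
  This bounds \<open>\<integral> (V u)\<^sup>2\<close> from below by \<open>\<integral> u\<^sup>2 / (4 \<rho>\<^sub>V\<^sup>2)\<close>, with \<open>\<rho>\<^sub>V(\<xi>)\<close> the distance from \<open>\<xi>\<close> to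
  \<open>-\<Omega>\<close> along the line. Since \<open>\<Omega>\<close> lies on one side of the hyperplane through \<open>\<xi>\<^sub>h\<close> orthogonal to
  \<open>\<nu>\<close>, the line leaves \<open>\<Omega>\<close> within parameter distance \<open>dist(\<xi>, \<partial>\<Omega>) / |\<langle>V, \<nu>\<rangle>|\<close>, i.e.
  \<open>\<langle>V, \<nu>\<rangle>\<^sup>2 / dist(\<xi>, \<partial>\<Omega>)\<^sup>2 \<le> 1 / \<rho>\<^sub>V(\<xi>)\<^sup>2\<close>. Summing over the \<open>2n\<close> fields gives the theorem.\<close>

lemma nn_integral_lborel_translate:
  fixes G :: "'a::euclidean_space \<Rightarrow> ennreal"
  assumes [measurable]: "G \<in> borel_measurable borel"
  shows "(\<integral>\<^sup>+x. G (x + c) \<partial>lborel) = (\<integral>\<^sup>+x. G x \<partial>lborel)"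
proof -
  have "(\<integral>\<^sup>+x. G x \<partial>lborel) = (\<integral>\<^sup>+x. G x \<partial>(distr lborel borel ((+) c)))"
    by (simp add: lborel_distr_plus)
  also have "\<dots> = (\<integral>\<^sup>+x. G (c + x) \<partial>lborel)"
    by (subst nn_integral_distr) auto
  finally show ?thesis by (simp add: add.commute)
qed

lemma nn_integral_lborel_prod:
  fixes f :: "'a::euclidean_space \<times> 'b::euclidean_space \<Rightarrow> ennreal"
  assumes "f \<in> borel_measurable borel"
  shows "(\<integral>\<^sup>+p. f p \<partial>lborel) = (\<integral>\<^sup>+x. \<integral>\<^sup>+y. f (x, y) \<partial>lborel \<partial>lborel)"
  using lborel.nn_integral_fst[of f lborel] assms by (simp add: lborel_prod)

lemma borel_measurable_continuous_compose:
  assumes "continuous_on UNIV h" "G \<in> borel_measurable borel"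
  shows "(\<lambda>x. G (h x)) \<in> borel_measurable borel"
  using measurable_compose[OF borel_measurable_continuous_onI[OF assms(1)] assms(2)]
  by (simp add: o_def)

lemma borel_measurable_fst_euclidean [measurable]:
  "fst \<in> borel_measurable (borel :: ('a::euclidean_space \<times> 'b::euclidean_space) measure)"
  by (intro borel_measurable_continuous_onI continuous_intros)

lemma borel_measurable_snd_euclidean [measurable]:
  "snd \<in> borel_measurable (borel :: ('a::euclidean_space \<times> 'b::euclidean_space) measure)"
  by (intro borel_measurable_continuous_onI continuous_intros)

lemma nn_integral_lborel_shear:
  fixes G :: "'a::euclidean_space \<times> 'b::euclidean_space \<Rightarrow> ennreal"
  assumes G: "G \<in> borel_measurable borel" and h: "continuous_on UNIV h"
  shows "(\<integral>\<^sup>+p. G (fst p, snd p + h (fst p)) \<partial>lborel) = (\<integral>\<^sup>+p. G p \<partial>lborel)"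
proof -
  have "(\<lambda>p. G (fst p, snd p + h (fst p))) \<in> borel_measurable borel"
    by (intro borel_measurable_continuous_compose[OF _ G] continuous_intros continuous_on_compose2[OF h]) auto
  then have "(\<integral>\<^sup>+p. G (fst p, snd p + h (fst p)) \<partial>lborel) = (\<integral>\<^sup>+x. \<integral>\<^sup>+y. G (x, y + h x) \<partial>lborel \<partial>lborel)"
    by (simp add: nn_integral_lborel_prod)
  also have "\<dots> = (\<integral>\<^sup>+x. \<integral>\<^sup>+y. G (x, y) \<partial>lborel \<partial>lborel)"
  proof (rule nn_integral_cong)
    fix x
    show "(\<integral>\<^sup>+y. G (x, y + h x) \<partial>lborel) = (\<integral>\<^sup>+y. G (x, y) \<partial>lborel)"
      by (intro nn_integral_lborel_translate borel_measurable_continuous_compose[OF _ G] continuous_intros)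
  qed
  also have "\<dots> = (\<integral>\<^sup>+p. G p \<partial>lborel)"
    using G by (simp add: nn_integral_lborel_prod)
  finally show ?thesis .
qed

lemma nn_set_integral_sum_plus:
  fixes f g :: "'i \<Rightarrow> 'a::euclidean_space \<Rightarrow> real"
  assumes "finite I" "A \<in> sets borel"
    and [measurable]: "\<And>i. f i \<in> borel_measurable borel" "\<And>i. g i \<in> borel_measurable borel"
    and "\<And>i x. 0 \<le> f i x" "\<And>i x. 0 \<le> g i x"
  shows "(\<integral>\<^sup>+x\<in>A. ennreal (\<Sum>i\<in>I. f i x + g i x) \<partial>lborel)
       = (\<Sum>i\<in>I. (\<integral>\<^sup>+x\<in>A. ennreal (f i x) \<partial>lborel) + (\<integral>\<^sup>+x\<in>A. ennreal (g i x) \<partial>lborel))"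
proof -
  have "(\<integral>\<^sup>+x\<in>A. ennreal (\<Sum>i\<in>I. f i x + g i x) \<partial>lborel)
      = (\<integral>\<^sup>+x. (\<Sum>i\<in>I. ennreal (f i x) * indicator A x + ennreal (g i x) * indicator A x) \<partial>lborel)"
    using assms(5,6) by (intro nn_integral_cong) (simp add: sum_nonneg ennreal_plus sum_distrib_right distrib_right flip: sum_ennreal)
  also have "\<dots> = (\<Sum>i\<in>I. (\<integral>\<^sup>+x\<in>A. ennreal (f i x) \<partial>lborel) + (\<integral>\<^sup>+x\<in>A. ennreal (g i x) \<partial>lborel))"
    using assms(2) by (subst nn_integral_sum) (auto simp: nn_integral_add)
  finally show ?thesis .
qed

lemma nn_integral_Icc_continuous:
  fixes f :: "real \<Rightarrow> real"
  assumes "continuous_on {a..b} f" "\<And>x. x \<in> {a..b} \<Longrightarrow> 0 \<le> f x"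
  shows "(\<integral>\<^sup>+x\<in>{a..b}. ennreal (f x) \<partial>lborel) = ennreal (integral {a..b} f)"
proof -
  have "(\<lambda>x. ennreal (f x) * indicator {a..b} x) = (\<lambda>x. ennreal (indicator {a..b} x * f x))"
    by (auto simp: indicator_def)
  then show ?thesis
    using nn_integral_has_integral_lebesgue[OF assms(2)
        integrable_integral[OF integrable_continuous_interval[OF assms(1)]]]
    by simp
qed

lemma nn_integral_Icc_combine:
  fixes f :: "real \<Rightarrow> real"
  assumes "x \<le> m" "m \<le> y" "continuous_on {x..y} f" "\<And>s. 0 \<le> f s"
  shows "ennreal (integral {x..m} f) + ennreal (integral {m..y} f) = (\<integral>\<^sup>+s\<in>{x..y}. ennreal (f s) \<partial>lborel)"
  using Henstock_Kurzweil_Integration.integral_combine[OF assms(1,2) integrable_continuous_interval[OF assms(3)]]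
    nn_integral_Icc_continuous[OF assms(3)] assms
  by (simp add: Henstock_Kurzweil_Integration.integral_nonneg integrable_continuous_interval continuous_on_subset
      flip: ennreal_plus)

section \<open>Hardy's inequality on the real line\<close>

lemma hardy_inequality_Icc:
  fixes g g' :: "real \<Rightarrow> real"
  assumes "a < c" "c \<le> m" and g: "\<And>s. (g has_real_derivative g' s) (at s)"
    and "continuous_on UNIV g'" and "g c = 0"
  shows "integral {c..m} (\<lambda>s. (g s)\<^sup>2 / (4 * (s - a)\<^sup>2)) \<le> integral {c..m} (\<lambda>s. (g' s)\<^sup>2)"
proof -
  \<comment> \<open>\<open>h' = (g')\<^sup>2 - g\<^sup>2 / (4 (s - a)\<^sup>2) - (g' - g / (2 (s - a)))\<^sup>2\<close>\<close>
  define h where "h s = (g s)\<^sup>2 / (2 * (s - a))" for s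
  define h' where "h' s = g s * g' s / (s - a) - (g s)\<^sup>2 / (2 * (s - a)\<^sup>2)" for s
  have pos: "s - a > 0" if "s \<in> {c..m}" for s
    using that \<open>a < c\<close> by auto
  have "continuous_on UNIV g"
    using g by (meson DERIV_continuous continuous_at_imp_continuous_on)
  then have int: "(\<lambda>s. (g s)\<^sup>2 / (4 * (s - a)\<^sup>2)) integrable_on {c..m}"
    "(\<lambda>s. (g' s)\<^sup>2) integrable_on {c..m}"
    using pos \<open>a < c\<close> \<open>continuous_on UNIV g'\<close>
    by (auto intro!: integrable_continuous_interval continuous_intros intro: continuous_on_subset)
  have h': "(h' has_integral (h m - h c)) {c..m}"
  proof (rule fundamental_theorem_of_calculus[OF \<open>c \<le> m\<close>])
    fix s assume "s \<in> {c..m}"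
    then have "s - a \<noteq> 0" using pos by force
    then have "(h has_real_derivative h' s) (at s)"
      unfolding h_def h'_def
      by (auto intro!: derivative_eq_intros g simp: divide_simps) (simp add: algebra_simps power2_eq_square)
    then show "(h has_vector_derivative h' s) (at s within {c..m})"
      by (simp add: has_real_derivative_iff_has_vector_derivative has_vector_derivative_at_within)
  qed
  moreover have le: "h' s \<le> (g' s)\<^sup>2 - (g s)\<^sup>2 / (4 * (s - a)\<^sup>2)" if "s \<in> {c..m}" for s
  proof -
    have square: "G'\<^sup>2 - G\<^sup>2 / (4 * d\<^sup>2) - (G * G' / d - G\<^sup>2 / (2 * d\<^sup>2)) = (G' - G / (2 * d))\<^sup>2"
      if "d \<noteq> 0" for d G G' :: real
      using that by (simp add: field_simps power2_eq_square)
    have "(g' s)\<^sup>2 - (g s)\<^sup>2 / (4 * (s - a)\<^sup>2) - h' s = (g' s - g s / (2 * (s - a)))\<^sup>2"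
      using pos[OF that] unfolding h'_def by (intro square) simp
    then show ?thesis by (metis diff_ge_0_iff_ge zero_le_power2)
  qed
  have "h m - h c \<le> integral {c..m} (\<lambda>s. (g' s)\<^sup>2 - (g s)\<^sup>2 / (4 * (s - a)\<^sup>2))"
    using has_integral_le[OF h' integrable_integral[OF integrable_diff[OF int(2,1)]]] le by auto
  moreover have "h m \<ge> 0" "h c = 0"
    using pos[of m] \<open>c \<le> m\<close> \<open>g c = 0\<close> by (auto simp: h_def)
  ultimately show ?thesis
    using integral_diff[OF int(2) int(1)] by simp
qed

lemma hardy_inequality_Icc_reflected:
  fixes g g' :: "real \<Rightarrow> real"
  assumes "c < b" "m \<le> c" and g: "\<And>s. (g has_real_derivative g' s) (at s)"
    and "continuous_on UNIV g'" and "g c = 0"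
  shows "integral {m..c} (\<lambda>s. (g s)\<^sup>2 / (4 * (b - s)\<^sup>2)) \<le> integral {m..c} (\<lambda>s. (g' s)\<^sup>2)"
proof -
  have "((\<lambda>s. g (- s)) has_real_derivative - g' (- s)) (at s)" for s
    using g[of "- s"] by (simp add: DERIV_mirror)
  moreover have "continuous_on UNIV (\<lambda>s. - g' (- s))"
    by (intro continuous_intros continuous_on_compose2[OF assms(4)]) auto
  ultimately have "integral {- c..- m} (\<lambda>s. (g (- s))\<^sup>2 / (4 * (s - - b)\<^sup>2))
      \<le> integral {- c..- m} (\<lambda>s. (- g' (- s))\<^sup>2)"
    using assms by (intro hardy_inequality_Icc) auto
  moreover have "integral {- c..- m} (\<lambda>s. (g (- s))\<^sup>2 / (4 * (s - - b)\<^sup>2))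
      = integral {m..c} (\<lambda>s. (g s)\<^sup>2 / (4 * (b - s)\<^sup>2))"
    using Henstock_Kurzweil_Integration.integral_reflect_real[of c m "\<lambda>s. (g s)\<^sup>2 / (4 * (b - s)\<^sup>2)"]
    by (simp add: algebra_simps)
  ultimately show ?thesis
    using Henstock_Kurzweil_Integration.integral_reflect_real[of c m "\<lambda>s. (g' s)\<^sup>2"] by simp
qed

lemma closed_disjoint_Icc_gap:
  fixes C :: "real set"
  assumes "closed C" "c1 \<le> c2" "{c1..c2} \<inter> C = {}"
  obtains a b where "a < c1" "c2 < b" "\<And>x. x \<in> C \<Longrightarrow> x \<le> a \<or> b \<le> x"
proof -
  obtain d where "d > 0" and d: "\<And>x y. x \<in> {c1..c2} \<Longrightarrow> y \<in> C \<Longrightarrow> d \<le> dist x y"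
    using separate_compact_closed[OF compact_Icc assms(1,3)] by blast
  have "y \<le> c1 - d \<or> c2 + d \<le> y" if "y \<in> C" for y
  proof -
    have "y \<notin> {c1..c2}" using that assms(3) by blast
    then show ?thesis
      using d[OF _ that, of c1] d[OF _ that, of c2] \<open>c1 \<le> c2\<close> by (auto simp: dist_real_def)
  qed
  then show ?thesis
    using \<open>d > 0\<close> that[of "c1 - d" "c2 + d"] by auto
qed

lemma le_infdistI:
  assumes "A \<noteq> {}" "\<And>y. y \<in> A \<Longrightarrow> d \<le> dist x y"
  shows "d \<le> infdist x A"
  using assms by (simp add: infdist_notempty) (rule cINF_greatest)

lemma inverse_infdist_sq_le_gap:
  fixes C :: "real set"
  assumes gap: "\<And>x. x \<in> C \<Longrightarrow> x \<le> a \<or> b \<le> x" and "a < s" "s < b"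
  shows "1 / (infdist s C)\<^sup>2 \<le> (if s \<le> (a + b) / 2 then 1 / (s - a)\<^sup>2 else 1 / (b - s)\<^sup>2)"
proof (cases "C = {}")
  case False
  then have "min (s - a) (b - s) \<le> infdist s C"
    using gap assms(2,3) by (intro le_infdistI) (force simp: dist_real_def)+
  then show ?thesis
    using assms(2,3) by (auto intro!: divide_left_mono power_mono mult_pos_pos)
qed (simp add: infdist_def)

lemma hardy_inequality_real:
  fixes g g' :: "real \<Rightarrow> real" and C :: "real set"
  assumes g: "\<And>s. (g has_real_derivative g' s) (at s)" and g': "continuous_on UNIV g'"
    and "closed C" "c1 \<le> c2" "{c1..c2} \<inter> C = {}" and supp: "\<And>s. s \<notin> {c1..c2} \<Longrightarrow> g s = 0"
  shows "(\<integral>\<^sup>+s. ennreal ((g s)\<^sup>2 / (4 * (infdist s C)\<^sup>2)) \<partial>lborel)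
      \<le> (\<integral>\<^sup>+s\<in>-C. ennreal ((g' s)\<^sup>2) \<partial>lborel)"
proof -
  obtain a b where "a < c1" "c2 < b" and gap: "\<And>x. x \<in> C \<Longrightarrow> x \<le> a \<or> b \<le> x"
    using closed_disjoint_Icc_gap assms(3-5) by blast
  \<comment> \<open>split the gap \<open>(a, b)\<close> at its midpoint, clamped to \<open>[c1, c2]\<close>\<close>
  define c where "c = (a + c1) / 2"
  define c' where "c' = (c2 + b) / 2"
  define m where "m = max c1 (min c2 ((a + b) / 2))"
  define fL where "fL s = (g s)\<^sup>2 / (4 * (s - a)\<^sup>2)" for s
  define fR where "fR s = (g s)\<^sup>2 / (4 * (b - s)\<^sup>2)" for s
  have "a < c" "c \<le> m" "m \<le> c'" "c' < b" "g c = 0" "g c' = 0"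
    using \<open>a < c1\<close> \<open>c1 \<le> c2\<close> \<open>c2 < b\<close> supp[of c] supp[of c'] by (auto simp: c_def c'_def m_def)
  have cont_g: "continuous_on UNIV g"
    using g by (meson DERIV_continuous continuous_at_imp_continuous_on)
  have [measurable]: "g \<in> borel_measurable borel"
    using cont_g by (rule borel_measurable_continuous_onI)
  have "ennreal ((g s)\<^sup>2 / (4 * (infdist s C)\<^sup>2))
      \<le> ennreal (fL s) * indicator {c..m} s + ennreal (fR s) * indicator {m..c'} s" for s
  proof (cases "g s = 0")
    case False
    then have "c1 \<le> s" "s \<le> c2" using supp by auto
    then have bound: "(g s)\<^sup>2 / 4 * (1 / (infdist s C)\<^sup>2)
        \<le> (g s)\<^sup>2 / 4 * (if s \<le> (a + b) / 2 then 1 / (s - a)\<^sup>2 else 1 / (b - s)\<^sup>2)"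
      using inverse_infdist_sq_le_gap[OF gap] \<open>a < c1\<close> \<open>c2 < b\<close> by (intro mult_left_mono) auto
    show ?thesis
    proof (cases "s \<le> (a + b) / 2")
      case True
      then have "(g s)\<^sup>2 / (4 * (infdist s C)\<^sup>2) \<le> fL s" "s \<in> {c..m}"
        using bound \<open>c1 \<le> s\<close> \<open>s \<le> c2\<close> \<open>a < c1\<close> by (auto simp: fL_def c_def m_def)
      then show ?thesis
        by (auto intro!: add_increasing2 ennreal_leI)
    next
      case False
      then have "(g s)\<^sup>2 / (4 * (infdist s C)\<^sup>2) \<le> fR s" "s \<in> {m..c'}"
        using bound \<open>c1 \<le> s\<close> \<open>s \<le> c2\<close> \<open>c2 < b\<close> by (auto simp: fR_def c'_def m_def)
      then show ?thesis
        by (auto intro!: add_increasing ennreal_leI)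
    qed
  qed simp
  then have "(\<integral>\<^sup>+s. ennreal ((g s)\<^sup>2 / (4 * (infdist s C)\<^sup>2)) \<partial>lborel)
      \<le> (\<integral>\<^sup>+s\<in>{c..m}. ennreal (fL s) \<partial>lborel) + (\<integral>\<^sup>+s\<in>{m..c'}. ennreal (fR s) \<partial>lborel)"
    by (subst nn_integral_add[symmetric]) (auto simp: fL_def fR_def intro: nn_integral_mono)
  also have "\<dots> = ennreal (integral {c..m} fL) + ennreal (integral {m..c'} fR)"
    using \<open>a < c\<close> \<open>c' < b\<close> unfolding fL_def fR_def
    by (subst (1 2) nn_integral_Icc_continuous)
       (auto intro!: continuous_intros continuous_on_subset[OF cont_g])
  also have "\<dots> \<le> ennreal (integral {c..m} (\<lambda>s. (g' s)\<^sup>2)) + ennreal (integral {m..c'} (\<lambda>s. (g' s)\<^sup>2))"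
    unfolding fL_def fR_def using \<open>a < c\<close> \<open>c \<le> m\<close> \<open>m \<le> c'\<close> \<open>c' < b\<close> \<open>g c = 0\<close> \<open>g c' = 0\<close>
    by (intro add_mono ennreal_leI hardy_inequality_Icc[OF _ _ g g'] hardy_inequality_Icc_reflected[OF _ _ g g'])
  also have "\<dots> = (\<integral>\<^sup>+s\<in>{c..c'}. ennreal ((g' s)\<^sup>2) \<partial>lborel)"
    using \<open>c \<le> m\<close> \<open>m \<le> c'\<close> by (intro nn_integral_Icc_combine continuous_intros continuous_on_subset[OF g']) auto
  also have "\<dots> \<le> (\<integral>\<^sup>+s\<in>-C. ennreal ((g' s)\<^sup>2) \<partial>lborel)"
    using gap \<open>a < c\<close> \<open>c' < b\<close>
    by (intro nn_integral_mono) (fastforce simp: indicator_def)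
  finally show ?thesis .
qed

section \<open>Lines through a convex domain\<close>

lemma convex_line_vimage:
  fixes \<Omega> :: "'a::real_vector set"
  assumes "convex \<Omega>"
  shows "convex {s::real. w + s *\<^sub>R v \<in> \<Omega>}"
proof -
  have "{s::real. w + s *\<^sub>R v \<in> \<Omega>} = (\<lambda>s. s *\<^sub>R v) -` ((\<lambda>x. - w + x) ` \<Omega>)"
    by (force simp: image_iff algebra_simps)
  then show ?thesis
    using assms by (simp add: convex_linear_vimage convex_translation linear_scaleR_left)
qed

lemma compact_line_vimage:
  fixes K :: "'a::euclidean_space set"
  assumes "compact K" "v \<noteq> 0"
  shows "compact {s::real. w + s *\<^sub>R v \<in> K}"
proof -
  obtain B where B: "\<And>x. x \<in> K \<Longrightarrow> norm x \<le> B"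
    using compact_imp_bounded[OF assms(1)] bounded_iff by blast
  have "\<bar>s\<bar> \<le> (B + norm w) / norm v" if "w + s *\<^sub>R v \<in> K" for s
  proof -
    have "\<bar>s\<bar> * norm v \<le> B + norm w"
      using B[OF that] norm_triangle_ineq4[of "w + s *\<^sub>R v" w] by simp
    then show ?thesis using assms(2) by (simp add: field_simps)
  qed
  then have "bounded {s::real. w + s *\<^sub>R v \<in> K}"
    unfolding bounded_iff by auto
  moreover have "closed ((\<lambda>s::real. w + s *\<^sub>R v) -` K)"
    using assms(1) by (intro continuous_closed_vimage continuous_intros compact_imp_closed) auto
  ultimately show ?thesis
    by (simp add: compact_eq_bounded_closed vimage_def)
qed

lemma convex_line_support_Icc:
  fixes \<Omega> K :: "'a::euclidean_space set"
  assumes "convex \<Omega>" "compact K" "K \<subseteq> \<Omega>" "v \<noteq> 0" "{s. w + s *\<^sub>R v \<in> K} \<noteq> {}"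
  obtains c1 c2 where "c1 \<le> c2" "{s. w + s *\<^sub>R v \<in> K} \<subseteq> {c1..c2}"
    "{c1..c2} \<inter> {s. w + s *\<^sub>R v \<notin> \<Omega>} = {}"
proof -
  define S where "S = {s. w + s *\<^sub>R v \<in> K}"
  have "compact S"
    unfolding S_def by (rule compact_line_vimage[OF assms(2,4)])
  then have "bdd_below S" "bdd_above S"
    by (auto intro: bounded_imp_bdd_below bounded_imp_bdd_above compact_imp_bounded)
  moreover have "S \<noteq> {}"
    using assms(5) by (simp add: S_def)
  ultimately have "Inf S \<in> S" "Sup S \<in> S" and S_Icc: "S \<subseteq> {Inf S..Sup S}"
    using \<open>compact S\<close>
    by (auto intro!: closed_contains_Inf closed_contains_Sup cInf_lower cSup_upper compact_imp_closed)
  have "is_interval {s. w + s *\<^sub>R v \<in> \<Omega>}"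
    unfolding is_interval_convex_1 by (rule convex_line_vimage[OF assms(1)])
  moreover have "Inf S \<in> {s. w + s *\<^sub>R v \<in> \<Omega>}" "Sup S \<in> {s. w + s *\<^sub>R v \<in> \<Omega>}"
    using \<open>Inf S \<in> S\<close> \<open>Sup S \<in> S\<close> assms(3) by (auto simp: S_def)
  ultimately have "{Inf S..Sup S} \<subseteq> {s. w + s *\<^sub>R v \<in> \<Omega>}"
    unfolding is_interval_1 by (meson atLeastAtMost_iff subsetI)
  moreover have "Inf S \<le> Sup S"
    using S_Icc \<open>Inf S \<in> S\<close> by auto
  ultimately show ?thesis
    using that[of "Inf S" "Sup S"] S_Icc by (auto simp: S_def)
qed

lemma infdist_0_translate:
  fixes C :: "real set"
  shows "infdist 0 {r. s + r \<in> C} = infdist s C"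
proof -
  have "{r. s + r \<in> C} = (\<lambda>x. x - s) ` C" by force
  then show ?thesis
    by (simp add: infdist_def image_comp o_def dist_real_def abs_minus_commute)
qed

text \<open>It is \<open>0\<close> if the line never leaves \<open>\<Omega>\<close>; then the weight \<open>1 / \<rho>\<^sup>2\<close> is \<open>0\<close> as well.\<close>
definition line_infdist :: "'a::real_normed_vector set \<Rightarrow> ('a \<Rightarrow> 'a) \<Rightarrow> 'a \<Rightarrow> real" where
  "line_infdist \<Omega> V \<xi> = infdist 0 {s. \<xi> + s *\<^sub>R V \<xi> \<notin> \<Omega>}"

lemma closed_line_exit_params:
  fixes \<Omega> :: "'a::real_normed_vector set"
  assumes "open \<Omega>"
  shows "closed {s::real. \<xi> + s *\<^sub>R v \<notin> \<Omega>}"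
proof -
  have "closed ((\<lambda>s. \<xi> + s *\<^sub>R v) -` (- \<Omega>))"
    using assms by (intro continuous_closed_vimage continuous_intros) auto
  then show ?thesis by (simp add: vimage_def)
qed

lemma closed_line_exits_within:
  fixes \<Omega> :: "'a::euclidean_space set"
  assumes "open \<Omega>" "continuous_on UNIV V"
  shows "closed {\<xi>. \<exists>s. s \<in> {-r..r} \<and> \<xi> + s *\<^sub>R V \<xi> \<notin> \<Omega>}"
proof -
  have "closed ((\<lambda>p :: real \<times> 'a. snd p + fst p *\<^sub>R V (snd p)) -` (- \<Omega>))"
    using assms
    by (intro continuous_closed_vimage continuous_intros continuous_on_compose2[OF assms(2)]) auto
  from closed_compact_projection[OF compact_Icc this, of "-r" r]
  show ?thesis by simp
qed

lemma borel_measurable_line_infdist: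
  fixes \<Omega> :: "'a::euclidean_space set"
  assumes "open \<Omega>" "continuous_on UNIV V"
  shows "line_infdist \<Omega> V \<in> borel_measurable borel"
proof (rule borel_measurableI_greater)
  fix y :: real
  define C where "C \<xi> = {s. \<xi> + s *\<^sub>R V \<xi> \<notin> \<Omega>}" for \<xi>
  define E where "E r = {\<xi>. \<exists>s. s \<in> {-r..r} \<and> \<xi> + s *\<^sub>R V \<xi> \<notin> \<Omega>}" for r :: real
  have E_iff: "\<xi> \<in> E r \<longleftrightarrow> (\<exists>s\<in>C \<xi>. \<bar>s\<bar> \<le> r)" for \<xi> r
    by (auto simp: E_def C_def abs_le_iff) (metis minus_le_iff)
  have rho: "line_infdist \<Omega> V \<xi> = infdist 0 (C \<xi>)" for \<xi>
    by (simp add: line_infdist_def C_def)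
  show "{\<xi> \<in> space borel. y < line_infdist \<Omega> V \<xi>} \<in> sets borel"
  proof (cases "y < 0")
    case True
    then have "{\<xi> \<in> space borel. y < line_infdist \<Omega> V \<xi>} = UNIV"
      using infdist_nonneg by (auto simp: rho intro: less_le_trans)
    then show ?thesis by simp
  next
    case False
    have "{\<xi> \<in> space borel. y < line_infdist \<Omega> V \<xi>} = (\<Union>n::nat. E n) \<inter> (\<Union>r\<in>{r\<in>\<rat>. y < r}. - E r)"
    proof (intro set_eqI iffI)
      fix \<xi> assume "\<xi> \<in> {\<xi> \<in> space borel. y < line_infdist \<Omega> V \<xi>}"
      then have lt: "y < infdist 0 (C \<xi>)" by (simp add: rho)
      then obtain s where "s \<in> C \<xi>" using False by (auto simp: infdist_def split: if_splits)
      moreover obtain n :: nat where "\<bar>s\<bar> \<le> n" using real_arch_simple by blast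
      moreover obtain r where r: "r \<in> \<rat>" "y < r" "r < infdist 0 (C \<xi>)"
        using Rats_dense_in_real[OF lt] by blast
      moreover have "\<xi> \<notin> E r"
        using r(3) infdist_le[of _ "C \<xi>" 0] by (force simp: E_iff)
      ultimately show "\<xi> \<in> (\<Union>n::nat. E n) \<inter> (\<Union>r\<in>{r\<in>\<rat>. y < r}. - E r)"
        by (auto simp: E_iff)
    next
      fix \<xi> assume "\<xi> \<in> (\<Union>n::nat. E n) \<inter> (\<Union>r\<in>{r\<in>\<rat>. y < r}. - E r)"
      then obtain n :: nat and r where "\<xi> \<in> E n" "y < r" "\<xi> \<notin> E r" by blast
      then have "r \<le> infdist 0 (C \<xi>)"
        by (intro le_infdistI) (auto simp: E_iff)
      then show "\<xi> \<in> {\<xi> \<in> space borel. y < line_infdist \<Omega> V \<xi>}"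
        using \<open>y < r\<close> by (simp add: rho)
    qed
    moreover have closed: "closed (E r)" for r
      unfolding E_def by (rule closed_line_exits_within[OF assms])
    then have "(\<Union>n::nat. E n) \<in> sets borel"
      by auto
    moreover have "(\<Union>r\<in>{r\<in>\<rat>. y < r}. - E r) \<in> sets borel"
      using closed by (intro sets.countable_UN'') (auto intro: countable_subset[OF _ countable_rat])
    ultimately show ?thesis
      by simp
  qed
qed

lemma ball_infdist_frontier_subset:
  fixes \<Omega> :: "'a::euclidean_space set"
  assumes "\<xi> \<in> \<Omega>"
  shows "ball \<xi> (infdist \<xi> (frontier \<Omega>)) \<subseteq> \<Omega>"
proof
  fix y assume y: "y \<in> ball \<xi> (infdist \<xi> (frontier \<Omega>))"
  show "y \<in> \<Omega>"
  proof (rule ccontr)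
    assume "y \<notin> \<Omega>"
    then obtain z where z: "z \<in> closed_segment \<xi> y" "z \<in> frontier \<Omega>"
      using connected_Int_frontier[of "closed_segment \<xi> y" \<Omega>] assms by auto
    have "infdist \<xi> (frontier \<Omega>) \<le> dist \<xi> y"
      using infdist_le[OF z(2), of \<xi>] dist_in_closed_segment[OF z(1)] by (simp add: dist_commute)
    then show False using y by simp
  qed
qed

lemma nearest_frontier_point_supporting:
  fixes \<Omega> :: "'a::euclidean_space set"
  assumes "open \<Omega>" "convex \<Omega>" "\<xi> \<in> \<Omega>" "\<xi>h \<in> frontier \<Omega>"
    and "dist \<xi> \<xi>h = infdist \<xi> (frontier \<Omega>)" and "x \<in> \<Omega>"
  shows "(\<xi>h - \<xi>) \<bullet> (x - \<xi>h) \<le> 0"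
proof -
  define w where "w = \<xi>h - \<xi>"
  have "\<xi>h \<notin> \<Omega>"
    using assms(1,4) by (simp add: frontier_def interior_open)
  then obtain a \<beta> where "a \<noteq> 0" and a: "\<And>y. y \<in> \<Omega> \<Longrightarrow> a \<bullet> y \<le> \<beta>" "\<beta> \<le> a \<bullet> \<xi>h"
    using separating_hyperplane_sets[OF assms(2) convex_singleton, of \<xi>h] assms(3) by auto
  have ball: "ball \<xi> (norm w) \<subseteq> \<Omega>"
    using ball_infdist_frontier_subset[OF assms(3)] assms(5) by (simp add: w_def dist_norm norm_minus_commute)
  have "norm w \<le> (a \<bullet> w) / norm a"
  proof (rule dense_le_bounded[of 0])
    show "0 < norm w" using \<open>\<xi>h \<notin> \<Omega>\<close> assms(3) by (auto simp: w_def)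
    fix t assume "0 < t" "t < norm w"
    then have "\<xi> + (t / norm a) *\<^sub>R a \<in> \<Omega>"
      using ball \<open>a \<noteq> 0\<close> by (auto simp: dist_norm)
    then have "a \<bullet> (\<xi> + (t / norm a) *\<^sub>R a) \<le> a \<bullet> (\<xi> + w)"
      using a by (force simp: w_def)
    then show "t \<le> (a \<bullet> w) / norm a"
      using \<open>a \<noteq> 0\<close> by (simp add: inner_simps dot_square_norm power2_eq_square field_simps)
  qed
  then have "a \<bullet> w = norm a * norm w"
    using norm_cauchy_schwarz[of a w] \<open>a \<noteq> 0\<close> by (simp add: field_simps)
  then have "norm a *\<^sub>R w = norm w *\<^sub>R a"
    by (simp add: norm_cauchy_schwarz_eq)
  moreover have "a \<bullet> (x - \<xi>h) \<le> 0"
    using a assms(6) by (force simp: inner_simps)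
  ultimately have "norm a * (w \<bullet> (x - \<xi>h)) \<le> 0"
    by (metis inner_scaleR_left mult_nonneg_nonpos norm_ge_zero)
  then show ?thesis
    using \<open>a \<noteq> 0\<close> by (simp add: w_def mult_le_0_iff)
qed

lemma normal_component_le_line_infdist:
  fixes \<Omega> :: "'a::euclidean_space set" and V :: "'a \<Rightarrow> 'a"
  assumes "open \<Omega>" "convex \<Omega>" "\<xi> \<in> \<Omega>" "\<xi>h \<in> frontier \<Omega>"
    and dist: "dist \<xi> \<xi>h = infdist \<xi> (frontier \<Omega>)"
    and \<nu>: "\<nu> = (\<xi>h - \<xi>) /\<^sub>R norm (\<xi>h - \<xi>)"
  shows "(V \<xi> \<bullet> \<nu>)\<^sup>2 / (infdist \<xi> (frontier \<Omega>))\<^sup>2 \<le> 1 / (line_infdist \<Omega> V \<xi>)\<^sup>2"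
proof (cases "V \<xi> \<bullet> \<nu> = 0")
  case False
  define D where "D = norm (\<xi>h - \<xi>)"
  define C where "C = {s. \<xi> + s *\<^sub>R V \<xi> \<notin> \<Omega>}"
  \<comment> \<open>the line through \<open>\<xi>\<close> meets the supporting hyperplane at \<open>\<xi>\<^sub>h\<close> at parameter \<open>s0\<close>\<close>
  define s0 where "s0 = D / (V \<xi> \<bullet> \<nu>)"
  have "\<xi>h \<notin> \<Omega>"
    using assms(1,4) by (simp add: frontier_def interior_open)
  then have "D > 0" using assms(3) by (auto simp: D_def)
  have D_eq: "infdist \<xi> (frontier \<Omega>) = D"
    using dist by (simp add: D_def dist_norm norm_minus_commute)
  have w: "\<xi>h = \<xi> + D *\<^sub>R \<nu>" "norm \<nu> = 1"
    using \<open>D > 0\<close> by (auto simp: \<nu> D_def)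
  have s0_C: "s0 \<in> C"
  proof (rule ccontr)
    assume "s0 \<notin> C"
    then have "\<xi> + s0 *\<^sub>R V \<xi> \<in> \<Omega>" by (simp add: C_def)
    then obtain e where "e > 0" "ball (\<xi> + s0 *\<^sub>R V \<xi>) e \<subseteq> \<Omega>"
      using assms(1) open_contains_ball by blast
    then have "\<xi> + s0 *\<^sub>R V \<xi> + (e / 2) *\<^sub>R \<nu> \<in> \<Omega>"
      using w(2) by (auto simp: dist_norm)
    from nearest_frontier_point_supporting[OF assms(1-5) this]
    have "(D *\<^sub>R \<nu>) \<bullet> (s0 *\<^sub>R V \<xi> + (e / 2) *\<^sub>R \<nu> - D *\<^sub>R \<nu>) \<le> 0"
      by (subst (asm) (1 2) w(1)) (simp add: algebra_simps)
    then show False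
      using False w(2) mult_pos_pos[OF \<open>e > 0\<close> \<open>D > 0\<close>]
      by (simp add: s0_def inner_simps inner_commute dot_square_norm power2_eq_square)
  qed
  have pos: "line_infdist \<Omega> V \<xi> > 0"
    unfolding line_infdist_def using assms(3) s0_C
    by (intro infdist_pos_not_in_closed closed_line_exit_params assms(1)) (auto simp: C_def)
  have "line_infdist \<Omega> V \<xi> * \<bar>V \<xi> \<bullet> \<nu>\<bar> \<le> D"
    using infdist_le[OF s0_C, of 0] False \<open>D > 0\<close>
    by (simp add: line_infdist_def C_def s0_def abs_div field_simps)
  then have "(line_infdist \<Omega> V \<xi> * \<bar>V \<xi> \<bullet> \<nu>\<bar>)\<^sup>2 \<le> D\<^sup>2"
    using pos by (intro power_mono) auto
  then show ?thesis
    using pos \<open>D > 0\<close> unfolding D_eq by (simp add: field_simps power_mult_distrib)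
qed simp

section \<open>Vector fields with straight integral lines\<close>

text \<open>The lines \<open>\<xi> + s V(\<xi>)\<close> foliate the space, \<open>V\<close> is constant on each of them and \<open>c\<close> is a
  coordinate increasing at unit speed along them, so \<open>{c \<in> [0, 1)}\<close> meets every line in a segment
  of length \<open>1\<close>; this is what disintegrates Lebesgue measure along the lines.\<close>
locale line_flow =
  fixes V :: "'a::euclidean_space \<Rightarrow> 'a" and c :: "'a \<Rightarrow> real"
  assumes continuous_V: "continuous_on UNIV V"
    and continuous_c: "continuous_on UNIV c"
    and V_along_line: "\<And>\<xi> s. V (\<xi> + s *\<^sub>R V \<xi>) = V \<xi>"
    and c_along_line: "\<And>\<xi> s. c (\<xi> + s *\<^sub>R V \<xi>) = c \<xi> + s"
    and nn_integral_flow: "\<And>s G. G \<in> borel_measurable borel \<Longrightarrow>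
          (\<integral>\<^sup>+\<xi>. G (\<xi> + s *\<^sub>R V \<xi>) \<partial>lborel) = (\<integral>\<^sup>+\<xi>. G \<xi> \<partial>lborel)"
begin

lemma V_nonzero: "V \<xi> \<noteq> 0"
  using c_along_line[of \<xi> 1] by auto

lemma nn_integral_along_lines:
  assumes [measurable]: "F \<in> borel_measurable borel"
  shows "(\<integral>\<^sup>+\<xi>. F \<xi> \<partial>lborel)
       = (\<integral>\<^sup>+w. \<integral>\<^sup>+s. indicator {0..<1} (c w) * F (w + s *\<^sub>R V w) \<partial>lborel \<partial>lborel)"
proof -
  have [measurable]: "c \<in> borel_measurable borel"
    by (rule borel_measurable_continuous_onI[OF continuous_c])
  have [measurable]: "(\<lambda>p::'a \<times> real. F (fst p + snd p *\<^sub>R V (fst p))) \<in> borel_measurable borel"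
    by (rule borel_measurable_continuous_compose[OF _ assms])
       (auto intro!: continuous_intros continuous_on_compose2[OF continuous_V])
  have "(\<lambda>p::'a \<times> real. indicator {0..<1} (c (fst p)) * F (fst p + snd p *\<^sub>R V (fst p)))
      \<in> borel_measurable borel"
    by measurable
  then have m1: "(\<lambda>p::'a \<times> real. indicator {0..<1} (c (fst p)) * F (fst p + snd p *\<^sub>R V (fst p)))
      \<in> borel_measurable (lborel \<Otimes>\<^sub>M lborel)"
    by (simp add: lborel_prod)
  have "(\<lambda>p::'a \<times> real. indicator {0..<1} (c (fst p) - snd p) * F (fst p)) \<in> borel_measurable borel"
    by measurable
  then have m2: "(\<lambda>p::'a \<times> real. indicator {0..<1} (c (fst p) - snd p) * F (fst p))
      \<in> borel_measurable (lborel \<Otimes>\<^sub>M lborel)"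
    by (simp add: lborel_prod)
  have "(\<integral>\<^sup>+w. \<integral>\<^sup>+s. indicator {0..<1} (c w) * F (w + s *\<^sub>R V w) \<partial>lborel \<partial>lborel)
      = (\<integral>\<^sup>+s. \<integral>\<^sup>+w. indicator {0..<1} (c w) * F (w + s *\<^sub>R V w) \<partial>lborel \<partial>lborel)"
    using lborel_pair.Fubini[OF m1] by simp
  also have "\<dots> = (\<integral>\<^sup>+s. \<integral>\<^sup>+\<xi>. indicator {0..<1} (c \<xi> - s) * F \<xi> \<partial>lborel \<partial>lborel)"
  proof (rule nn_integral_cong)
    fix s :: real
    have "(\<lambda>\<xi>. indicator {0..<1} (c \<xi> - s) * F \<xi>) \<in> borel_measurable borel"
      by measurable
    from nn_integral_flow[OF this, of s]
    show "(\<integral>\<^sup>+w. indicator {0..<1} (c w) * F (w + s *\<^sub>R V w) \<partial>lborel)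
        = (\<integral>\<^sup>+\<xi>. indicator {0..<1} (c \<xi> - s) * F \<xi> \<partial>lborel)"
      by (simp add: c_along_line)
  qed
  also have "\<dots> = (\<integral>\<^sup>+\<xi>. \<integral>\<^sup>+s. indicator {0..<1} (c \<xi> - s) * F \<xi> \<partial>lborel \<partial>lborel)"
    using lborel_pair.Fubini[OF m2] by simp
  also have "\<dots> = (\<integral>\<^sup>+\<xi>. \<integral>\<^sup>+s. F \<xi> * indicator {c \<xi> - 1<..c \<xi>} s \<partial>lborel \<partial>lborel)"
    by (intro nn_integral_cong) (auto simp: indicator_def)
  also have "\<dots> = (\<integral>\<^sup>+\<xi>. F \<xi> \<partial>lborel)"
    by (simp add: nn_integral_cmult_indicator)
  finally show ?thesis ..
qed

lemma nn_integral_mono_along_lines: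
  assumes "F \<in> borel_measurable borel" "L \<in> borel_measurable borel"
    and "\<And>w. (\<integral>\<^sup>+s. F (w + s *\<^sub>R V w) \<partial>lborel) \<le> (\<integral>\<^sup>+s. L (w + s *\<^sub>R V w) \<partial>lborel)"
  shows "(\<integral>\<^sup>+\<xi>. F \<xi> \<partial>lborel) \<le> (\<integral>\<^sup>+\<xi>. L \<xi> \<partial>lborel)"
  unfolding nn_integral_along_lines[OF assms(1)] nn_integral_along_lines[OF assms(2)]
  by (rule nn_integral_mono) (auto simp: indicator_def assms(3))

lemma hardy_along_line:
  fixes u :: "'a \<Rightarrow> real" and Du :: "'a \<Rightarrow> 'a \<Rightarrow> real"
  assumes "open \<Omega>" "convex \<Omega>"
    and du: "\<And>\<xi>. (u has_derivative Du \<xi>) (at \<xi>)"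
    and cont_DuV: "continuous_on UNIV (\<lambda>\<xi>. Du \<xi> (V \<xi>))"
    and K: "compact K" "K \<subseteq> \<Omega>" "\<And>\<xi>. \<xi> \<notin> K \<Longrightarrow> u \<xi> = 0"
  shows "(\<integral>\<^sup>+s. ennreal ((u (w + s *\<^sub>R V w))\<^sup>2 / (4 * (line_infdist \<Omega> V (w + s *\<^sub>R V w))\<^sup>2))
              * indicator \<Omega> (w + s *\<^sub>R V w) \<partial>lborel)
       \<le> (\<integral>\<^sup>+s. ennreal ((Du (w + s *\<^sub>R V w) (V (w + s *\<^sub>R V w)))\<^sup>2)
              * indicator \<Omega> (w + s *\<^sub>R V w) \<partial>lborel)"
proof -
  define p where "p s = w + s *\<^sub>R V w" for s
  define g where "g s = u (p s)" for s
  define g' where "g' s = Du (p s) (V w)" for s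
  define C where "C = {s. p s \<notin> \<Omega>}"
  define S where "S = {s. p s \<in> K}"
  have V_p: "V (p s) = V w" for s
    unfolding p_def by (rule V_along_line)
  have g: "(g has_real_derivative g' s) (at s)" for s
  proof -
    have "(g has_derivative (\<lambda>h. Du (p s) (h *\<^sub>R V w))) (at s)"
      unfolding g_def[abs_def] p_def
      by (rule has_derivative_compose[OF _ du, of "\<lambda>s. w + s *\<^sub>R V w", unfolded o_def])
         (auto intro!: derivative_eq_intros)
    moreover have "(\<lambda>h. Du (p s) (h *\<^sub>R V w)) = (*) (g' s)"
      using linear_scale[OF has_derivative_linear[OF du]] by (auto simp: g'_def mult.commute)
    ultimately show ?thesis
      by (simp add: has_field_derivative_def)
  qed
  have "g' = (\<lambda>\<xi>. Du \<xi> (V \<xi>)) \<circ> p"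
    by (auto simp: g'_def V_p)
  then have g': "continuous_on UNIV g'"
    unfolding p_def by (auto intro!: continuous_on_compose2[OF cont_DuV] continuous_intros)
  have "closed C"
    unfolding C_def p_def by (rule closed_line_exit_params[OF assms(1)])
  have line_infdist_p: "line_infdist \<Omega> V (p s) = infdist s C" for s
  proof -
    have "p s + r *\<^sub>R V (p s) = p (s + r)" for r
      unfolding V_p by (simp add: p_def algebra_simps)
    then show ?thesis
      using infdist_0_translate[of s C] by (simp add: line_infdist_def C_def)
  qed
  have "(\<integral>\<^sup>+s. ennreal ((u (p s))\<^sup>2 / (4 * (line_infdist \<Omega> V (p s))\<^sup>2)) * indicator \<Omega> (p s) \<partial>lborel)
      \<le> (\<integral>\<^sup>+s. ennreal ((g s)\<^sup>2 / (4 * (infdist s C)\<^sup>2)) \<partial>lborel)"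
    by (intro nn_integral_mono) (auto simp: line_infdist_p g_def indicator_def)
  also have "\<dots> \<le> (\<integral>\<^sup>+s\<in>-C. ennreal ((g' s)\<^sup>2) \<partial>lborel)"
  proof (cases "S = {}")
    case True
    then show ?thesis by (simp add: g_def S_def K(3))
  next
    case False
    then obtain c1 c2 where "c1 \<le> c2" "S \<subseteq> {c1..c2}" "{c1..c2} \<inter> C = {}"
      using convex_line_support_Icc[OF assms(2) K(1,2) V_nonzero] unfolding S_def C_def p_def by blast
    moreover have "g s = 0" if "s \<notin> {c1..c2}" for s
    proof -
      have "s \<notin> S" using that \<open>S \<subseteq> {c1..c2}\<close> by blast
      then show ?thesis using K(3) by (simp add: g_def S_def)
    qed
    ultimately show ?thesis
      by (intro hardy_inequality_real[OF g g' \<open>closed C\<close>])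
  qed
  also have "\<dots> = (\<integral>\<^sup>+s. ennreal ((Du (p s) (V (p s)))\<^sup>2) * indicator \<Omega> (p s) \<partial>lborel)"
  proof (rule nn_integral_cong)
    fix s
    show "ennreal ((g' s)\<^sup>2) * indicator (- C) s = ennreal ((Du (p s) (V (p s)))\<^sup>2) * indicator \<Omega> (p s)"
      by (simp add: C_def g'_def V_p indicator_def)
  qed
  finally show ?thesis
    unfolding p_def .
qed

lemma hardy_along_field:
  fixes u :: "'a \<Rightarrow> real" and Du :: "'a \<Rightarrow> 'a \<Rightarrow> real"
  assumes "open \<Omega>" "convex \<Omega>"
    and du: "\<And>\<xi>. (u has_derivative Du \<xi>) (at \<xi>)"
    and cont_DuV: "continuous_on UNIV (\<lambda>\<xi>. Du \<xi> (V \<xi>))"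
    and K: "compact K" "K \<subseteq> \<Omega>" "\<And>\<xi>. \<xi> \<notin> K \<Longrightarrow> u \<xi> = 0"
  shows "(\<integral>\<^sup>+\<xi>\<in>\<Omega>. ennreal ((u \<xi>)\<^sup>2 / (4 * (line_infdist \<Omega> V \<xi>)\<^sup>2)) \<partial>lborel)
       \<le> (\<integral>\<^sup>+\<xi>\<in>\<Omega>. ennreal ((Du \<xi> (V \<xi>))\<^sup>2) \<partial>lborel)"
proof -
  have "continuous_on UNIV u"
    using du by (meson differentiableI differentiable_at_imp_differentiable_on differentiable_imp_continuous_on)
  then have [measurable]: "u \<in> borel_measurable borel"
    by (rule borel_measurable_continuous_onI)
  have [measurable]: "(\<lambda>\<xi>. Du \<xi> (V \<xi>)) \<in> borel_measurable borel"
    by (rule borel_measurable_continuous_onI[OF cont_DuV])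
  have [measurable]: "line_infdist \<Omega> V \<in> borel_measurable borel"
    by (rule borel_measurable_line_infdist[OF assms(1) continuous_V])
  have [measurable]: "\<Omega> \<in> sets borel"
    using assms(1) by simp
  have "(\<lambda>\<xi>. ennreal ((u \<xi>)\<^sup>2 / (4 * (line_infdist \<Omega> V \<xi>)\<^sup>2)) * indicator \<Omega> \<xi>) \<in> borel_measurable borel"
    by measurable
  moreover have "(\<lambda>\<xi>. ennreal ((Du \<xi> (V \<xi>))\<^sup>2) * indicator \<Omega> \<xi>) \<in> borel_measurable borel"
    by measurable
  ultimately show ?thesis
  proof (rule nn_integral_mono_along_lines)
    fix w
    show "(\<integral>\<^sup>+s. ennreal ((u (w + s *\<^sub>R V w))\<^sup>2 / (4 * (line_infdist \<Omega> V (w + s *\<^sub>R V w))\<^sup>2))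
              * indicator \<Omega> (w + s *\<^sub>R V w) \<partial>lborel)
       \<le> (\<integral>\<^sup>+s. ennreal ((Du (w + s *\<^sub>R V w) (V (w + s *\<^sub>R V w)))\<^sup>2)
              * indicator \<Omega> (w + s *\<^sub>R V w) \<partial>lborel)"
      by (rule hardy_along_line[OF assms])
  qed
qed

end

section \<open>The Heisenberg vector fields\<close>

lemma nn_integral_Yf_flow:
  fixes G :: "'n::finite hpt \<Rightarrow> ennreal"
  assumes "G \<in> borel_measurable borel"
  shows "(\<integral>\<^sup>+\<xi>. G (\<xi> + s *\<^sub>R Yf i \<xi>) \<partial>lborel) = (\<integral>\<^sup>+\<xi>. G \<xi> \<partial>lborel)"
proof -
  have "\<xi> + s *\<^sub>R Yf i \<xi> = (fst \<xi>, snd \<xi> + (s *\<^sub>R axis i 1, - (2 * s * fst \<xi> $ i)))" for \<xi>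
    by (cases \<xi>) (simp add: Yf_def)
  then show ?thesis
    using nn_integral_lborel_shear[OF assms, of "\<lambda>x. (s *\<^sub>R axis i 1, - (2 * s * x $ i))"]
    by (simp add: continuous_intros)
qed

lemma nn_integral_Xf_flow:
  fixes G :: "'n::finite hpt \<Rightarrow> ennreal"
  assumes G: "G \<in> borel_measurable borel"
  shows "(\<integral>\<^sup>+\<xi>. G (\<xi> + s *\<^sub>R Xf i \<xi>) \<partial>lborel) = (\<integral>\<^sup>+\<xi>. G \<xi> \<partial>lborel)"
proof -
  \<comment> \<open>the flow of \<open>X\<^sub>i\<close> is a shear in \<open>t\<close> followed by a translation in \<open>x\<close>\<close>
  define H where "H \<xi> = G (\<xi> + (s *\<^sub>R axis i 1, 0, 0))" for \<xi> :: "'n hpt"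
  have H: "H \<in> borel_measurable borel"
    unfolding H_def by (intro borel_measurable_continuous_compose[OF _ G] continuous_intros)
  have "\<xi> + s *\<^sub>R Xf i \<xi> = (fst \<xi>, fst (snd \<xi>), snd (snd \<xi>) + 2 * s * fst (snd \<xi>) $ i) + (s *\<^sub>R axis i 1, 0, 0)" for \<xi>
    by (cases \<xi>) (simp add: Xf_def)
  then have "(\<integral>\<^sup>+\<xi>. G (\<xi> + s *\<^sub>R Xf i \<xi>) \<partial>lborel)
      = (\<integral>\<^sup>+\<xi>. H (fst \<xi>, fst (snd \<xi>), snd (snd \<xi>) + 2 * s * fst (snd \<xi>) $ i) \<partial>lborel)"
    by (simp add: H_def)
  also have "\<dots> = (\<integral>\<^sup>+x. \<integral>\<^sup>+q. H (x, fst q, snd q + 2 * s * fst q $ i) \<partial>lborel \<partial>lborel)"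
    using H by (subst nn_integral_lborel_prod) (auto intro!: borel_measurable_continuous_compose[OF _ H] continuous_intros)
  also have "\<dots> = (\<integral>\<^sup>+x. \<integral>\<^sup>+q. H (x, q) \<partial>lborel \<partial>lborel)"
  proof (rule nn_integral_cong)
    fix x
    show "(\<integral>\<^sup>+q. H (x, fst q, snd q + 2 * s * fst q $ i) \<partial>lborel) = (\<integral>\<^sup>+q. H (x, q) \<partial>lborel)"
      using nn_integral_lborel_shear[of "\<lambda>q. H (x, q)" "\<lambda>y. 2 * s * y $ i"] H
      by (simp add: continuous_intros)
  qed
  also have "\<dots> = (\<integral>\<^sup>+\<xi>. H \<xi> \<partial>lborel)"
    using H by (simp add: nn_integral_lborel_prod)
  also have "\<dots> = (\<integral>\<^sup>+\<xi>. G \<xi> \<partial>lborel)"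
    unfolding H_def by (rule nn_integral_lborel_translate[OF G])
  finally show ?thesis .
qed

lemma line_flow_Xf: "line_flow (Xf i) (\<lambda>\<xi>. fst \<xi> $ i)"
proof
  have "Xf i = (\<lambda>\<xi>. (axis i 1, 0, 2 * fst (snd \<xi>) $ i))"
    by (auto simp: Xf_def fun_eq_iff split: prod.splits)
  then show "continuous_on UNIV (Xf i)"
    by (simp add: continuous_intros)
  show "(\<integral>\<^sup>+\<xi>. G (\<xi> + s *\<^sub>R Xf i \<xi>) \<partial>lborel) = (\<integral>\<^sup>+\<xi>. G \<xi> \<partial>lborel)"
    if "G \<in> borel_measurable borel" for s and G :: "_ \<Rightarrow> ennreal"
    using that by (rule nn_integral_Xf_flow)
qed (auto simp: Xf_def axis_def continuous_intros split: prod.splits)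

lemma line_flow_Yf: "line_flow (Yf i) (\<lambda>\<xi>. fst (snd \<xi>) $ i)"
proof
  have "Yf i = (\<lambda>\<xi>. (0, axis i 1, - 2 * fst \<xi> $ i))"
    by (auto simp: Yf_def fun_eq_iff split: prod.splits)
  then show "continuous_on UNIV (Yf i)"
    by (simp add: continuous_intros)
  show "(\<integral>\<^sup>+\<xi>. G (\<xi> + s *\<^sub>R Yf i \<xi>) \<partial>lborel) = (\<integral>\<^sup>+\<xi>. G \<xi> \<partial>lborel)"
    if "G \<in> borel_measurable borel" for s and G :: "_ \<Rightarrow> ennreal"
    using that by (rule nn_integral_Yf_flow)
qed (auto simp: Yf_def axis_def continuous_intros split: prod.splits)

lemma smooth_fun_has_derivative:
  assumes "smooth_fun u"
  shows "(u has_derivative frechet_derivative u (at \<xi>)) (at \<xi>)"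
  using assms by (auto elim: smooth_fun.cases simp flip: frechet_derivative_works)

lemma smooth_fun_continuous_on:
  assumes "smooth_fun u"
  shows "continuous_on UNIV u"
  using smooth_fun_has_derivative[OF assms]
  by (meson differentiableI differentiable_at_imp_differentiable_on differentiable_imp_continuous_on)

lemma smooth_fun_continuous_derivative_along:
  fixes u :: "'a::euclidean_space \<Rightarrow> real"
  assumes "smooth_fun u" "continuous_on UNIV V"
  shows "continuous_on UNIV (\<lambda>\<xi>. frechet_derivative u (at \<xi>) (V \<xi>))"
proof -
  have "frechet_derivative u (at \<xi>) (V \<xi>) = (\<Sum>b\<in>Basis. (V \<xi> \<bullet> b) * frechet_derivative u (at \<xi>) b)" for \<xi>
    using Linear_Algebra.linear_componentwise[OF has_derivative_linear[OF smooth_fun_has_derivative[OF assms(1)]],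
        where x="V \<xi>" and j=1]
    by simp
  moreover have "continuous_on UNIV (\<lambda>\<xi>. frechet_derivative u (at \<xi>) b)" if "b \<in> Basis" for b
    using assms(1) that by (auto elim: smooth_fun.cases intro: smooth_fun_continuous_on)
  then have "continuous_on UNIV (\<lambda>\<xi>. \<Sum>b\<in>Basis. (V \<xi> \<bullet> b) * frechet_derivative u (at \<xi>) b)"
    by (intro continuous_on_sum continuous_intros continuous_on_compose2[OF assms(2)]) auto
  ultimately show ?thesis
    by simp
qed

lemma horizontal_normal_sum_le_line_infdist:
  fixes \<Omega> :: "'n::finite hpt set"
  assumes "open \<Omega>" "convex \<Omega>" "\<xi> \<in> \<Omega>" "\<xi>h \<in> frontier \<Omega>"
    and "dist \<xi> \<xi>h = infdist \<xi> (frontier \<Omega>)" "\<nu> = (\<xi>h - \<xi>) /\<^sub>R norm (\<xi>h - \<xi>)"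
  shows "(1/4) * (\<Sum>i\<in>UNIV. (Xf i \<xi> \<bullet> \<nu>)\<^sup>2 + (Yf i \<xi> \<bullet> \<nu>)\<^sup>2) / (infdist \<xi> (frontier \<Omega>))\<^sup>2 * (u \<xi>)\<^sup>2
       \<le> (\<Sum>i\<in>UNIV. (u \<xi>)\<^sup>2 / (4 * (line_infdist \<Omega> (Xf i) \<xi>)\<^sup>2)
                     + (u \<xi>)\<^sup>2 / (4 * (line_infdist \<Omega> (Yf i) \<xi>)\<^sup>2))"
proof -
  have "(1/4) * (\<Sum>i\<in>UNIV. (Xf i \<xi> \<bullet> \<nu>)\<^sup>2 + (Yf i \<xi> \<bullet> \<nu>)\<^sup>2) / (infdist \<xi> (frontier \<Omega>))\<^sup>2 * (u \<xi>)\<^sup>2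
      = (\<Sum>i\<in>UNIV. ((Xf i \<xi> \<bullet> \<nu>)\<^sup>2 / (infdist \<xi> (frontier \<Omega>))\<^sup>2
                    + (Yf i \<xi> \<bullet> \<nu>)\<^sup>2 / (infdist \<xi> (frontier \<Omega>))\<^sup>2) * ((u \<xi>)\<^sup>2 / 4))"
    by (simp add: sum_distrib_left sum_distrib_right add_divide_distrib[symmetric]
        sum_divide_distrib[symmetric] mult.commute)
  also have "\<dots> \<le> (\<Sum>i\<in>UNIV. (1 / (line_infdist \<Omega> (Xf i) \<xi>)\<^sup>2
                    + 1 / (line_infdist \<Omega> (Yf i) \<xi>)\<^sup>2) * ((u \<xi>)\<^sup>2 / 4))"
    by (intro sum_mono mult_right_mono add_mono normal_component_le_line_infdist[OF assms]) auto
  also have "\<dots> = (\<Sum>i\<in>UNIV. (u \<xi>)\<^sup>2 / (4 * (line_infdist \<Omega> (Xf i) \<xi>)\<^sup>2)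
                     + (u \<xi>)\<^sup>2 / (4 * (line_infdist \<Omega> (Yf i) \<xi>)\<^sup>2))"
    by (intro sum.cong refl) (simp add: distrib_right)
  finally show ?thesis .
qed

lemma nn_integral_hgrad_sq_ge_line_infdist:
  fixes \<Omega> :: "'n::finite hpt set"
  assumes "open \<Omega>" "convex \<Omega>" "C0_inf \<Omega> u"
  shows "(\<integral>\<^sup>+\<xi>\<in>\<Omega>. ennreal (\<Sum>i\<in>UNIV. (u \<xi>)\<^sup>2 / (4 * (line_infdist \<Omega> (Xf i) \<xi>)\<^sup>2)
                                  + (u \<xi>)\<^sup>2 / (4 * (line_infdist \<Omega> (Yf i) \<xi>)\<^sup>2)) \<partial>lborel)
       \<le> (\<integral>\<^sup>+\<xi>\<in>\<Omega>. ennreal (hgrad_sq u \<xi>) \<partial>lborel)"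
proof -
  define K where "K = closure {x. u x \<noteq> 0}"
  have u: "smooth_fun u" and K: "compact K" "K \<subseteq> \<Omega>" "\<And>\<xi>. \<xi> \<notin> K \<Longrightarrow> u \<xi> = 0"
    using assms(3) closure_subset[of "{x. u x \<noteq> 0}"] by (auto simp: C0_inf_def K_def)
  note hardy_X = line_flow.hardy_along_field[OF line_flow_Xf assms(1,2) smooth_fun_has_derivative[OF u]
      smooth_fun_continuous_derivative_along[OF u line_flow.continuous_V[OF line_flow_Xf]] K]
  note hardy_Y = line_flow.hardy_along_field[OF line_flow_Yf assms(1,2) smooth_fun_has_derivative[OF u]
      smooth_fun_continuous_derivative_along[OF u line_flow.continuous_V[OF line_flow_Yf]] K]
  have [measurable]: "u \<in> borel_measurable borel" "\<Omega> \<in> sets borel"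
    using assms(1) smooth_fun_continuous_on[OF u] by (auto intro: borel_measurable_continuous_onI)
  have [measurable]: "line_infdist \<Omega> (Xf i) \<in> borel_measurable borel"
    "line_infdist \<Omega> (Yf i) \<in> borel_measurable borel" for i
    by (intro borel_measurable_line_infdist assms(1) line_flow.continuous_V[OF line_flow_Xf]
        line_flow.continuous_V[OF line_flow_Yf])+
  have [measurable]: "(\<lambda>\<xi>. frechet_derivative u (at \<xi>) (Xf i \<xi>)) \<in> borel_measurable borel"
    "(\<lambda>\<xi>. frechet_derivative u (at \<xi>) (Yf i \<xi>)) \<in> borel_measurable borel" for i
    by (intro borel_measurable_continuous_onI smooth_fun_continuous_derivative_along[OF u]
        line_flow.continuous_V[OF line_flow_Xf] line_flow.continuous_V[OF line_flow_Yf])+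
  have "(\<integral>\<^sup>+\<xi>\<in>\<Omega>. ennreal (\<Sum>i\<in>UNIV. (u \<xi>)\<^sup>2 / (4 * (line_infdist \<Omega> (Xf i) \<xi>)\<^sup>2)
                                  + (u \<xi>)\<^sup>2 / (4 * (line_infdist \<Omega> (Yf i) \<xi>)\<^sup>2)) \<partial>lborel)
      = (\<Sum>i\<in>UNIV. (\<integral>\<^sup>+\<xi>\<in>\<Omega>. ennreal ((u \<xi>)\<^sup>2 / (4 * (line_infdist \<Omega> (Xf i) \<xi>)\<^sup>2)) \<partial>lborel)
                   + (\<integral>\<^sup>+\<xi>\<in>\<Omega>. ennreal ((u \<xi>)\<^sup>2 / (4 * (line_infdist \<Omega> (Yf i) \<xi>)\<^sup>2)) \<partial>lborel))"
    by (rule nn_set_integral_sum_plus) auto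
  also have "\<dots> \<le> (\<Sum>i\<in>UNIV. (\<integral>\<^sup>+\<xi>\<in>\<Omega>. ennreal ((frechet_derivative u (at \<xi>) (Xf i \<xi>))\<^sup>2) \<partial>lborel)
                   + (\<integral>\<^sup>+\<xi>\<in>\<Omega>. ennreal ((frechet_derivative u (at \<xi>) (Yf i \<xi>))\<^sup>2) \<partial>lborel))"
    by (intro sum_mono add_mono hardy_X hardy_Y)
  also have "\<dots> = (\<integral>\<^sup>+\<xi>\<in>\<Omega>. ennreal (hgrad_sq u \<xi>) \<partial>lborel)"
    unfolding hgrad_sq_def by (rule nn_set_integral_sum_plus[symmetric]) auto
  finally show ?thesis .
qed

theorem theorem3p1:
  fixes \<Omega> :: "'n::finite hpt set"
    and \<nu> :: "'n hpt \<Rightarrow> 'n hpt"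
    and u :: "'n hpt \<Rightarrow> real"
  assumes "open \<Omega>" and "convex \<Omega>" and "\<Omega> \<noteq> {}" and "\<Omega> \<noteq> UNIV"
    and nu: "\<And>\<xi>. \<xi> \<in> \<Omega> \<Longrightarrow> \<exists>\<xi>h \<in> frontier \<Omega>.
               dist \<xi> \<xi>h = infdist \<xi> (frontier \<Omega>) \<and> \<nu> \<xi> = (\<xi>h - \<xi>) /\<^sub>R norm (\<xi>h - \<xi>)"
    and "C0_inf \<Omega> u"
  shows "(\<integral>\<^sup>+\<xi>\<in>\<Omega>. ennreal (hgrad_sq u \<xi>) \<partial>lebesgue)
     \<ge> (\<integral>\<^sup>+\<xi>\<in>\<Omega>. ennreal ((1/4) * (\<Sum>i\<in>UNIV. (Xf i \<xi> \<bullet> \<nu> \<xi>)\<^sup>2 + (Yf i \<xi> \<bullet> \<nu> \<xi>)\<^sup>2)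
                         / (infdist \<xi> (frontier \<Omega>))\<^sup>2 * (u \<xi>)\<^sup>2) \<partial>lebesgue)"
proof -
  define R where "R \<xi> = (\<Sum>i\<in>UNIV. (u \<xi>)\<^sup>2 / (4 * (line_infdist \<Omega> (Xf i) \<xi>)\<^sup>2)
                                  + (u \<xi>)\<^sup>2 / (4 * (line_infdist \<Omega> (Yf i) \<xi>)\<^sup>2))" for \<xi>
  have "(\<integral>\<^sup>+\<xi>\<in>\<Omega>. ennreal ((1/4) * (\<Sum>i\<in>UNIV. (Xf i \<xi> \<bullet> \<nu> \<xi>)\<^sup>2 + (Yf i \<xi> \<bullet> \<nu> \<xi>)\<^sup>2)
                         / (infdist \<xi> (frontier \<Omega>))\<^sup>2 * (u \<xi>)\<^sup>2) \<partial>lebesgue)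
      \<le> (\<integral>\<^sup>+\<xi>\<in>\<Omega>. ennreal (R \<xi>) \<partial>lebesgue)"
  proof (rule nn_integral_mono)
    fix \<xi>
    show "ennreal ((1/4) * (\<Sum>i\<in>UNIV. (Xf i \<xi> \<bullet> \<nu> \<xi>)\<^sup>2 + (Yf i \<xi> \<bullet> \<nu> \<xi>)\<^sup>2)
            / (infdist \<xi> (frontier \<Omega>))\<^sup>2 * (u \<xi>)\<^sup>2) * indicator \<Omega> \<xi>
        \<le> ennreal (R \<xi>) * indicator \<Omega> \<xi>"
    proof (cases "\<xi> \<in> \<Omega>")
      case True
      then obtain \<xi>h where "\<xi>h \<in> frontier \<Omega>" "dist \<xi> \<xi>h = infdist \<xi> (frontier \<Omega>)"
        "\<nu> \<xi> = (\<xi>h - \<xi>) /\<^sub>R norm (\<xi>h - \<xi>)"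
        using nu by blast
      from horizontal_normal_sum_le_line_infdist[OF assms(1,2) True this]
      show ?thesis
        using True unfolding R_def by (simp add: ennreal_leI)
    qed simp
  qed
  also have "\<dots> = (\<integral>\<^sup>+\<xi>\<in>\<Omega>. ennreal (R \<xi>) \<partial>lborel)"
    by (simp add: nn_integral_completion)
  also have "\<dots> \<le> (\<integral>\<^sup>+\<xi>\<in>\<Omega>. ennreal (hgrad_sq u \<xi>) \<partial>lborel)"
    unfolding R_def by (rule nn_integral_hgrad_sq_ge_line_infdist[OF assms(1,2,6)])
  also have "\<dots> = (\<integral>\<^sup>+\<xi>\<in>\<Omega>. ennreal (hgrad_sq u \<xi>) \<partial>lebesgue)"
    by (simp add: nn_integral_completion)
  finally show ?thesis .
qed

end
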